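(* Let $\mathcal{P}$ be a Poisson point process of intensity one in $\mathbb{R}^d$ and let $a_0>0$. For $x\in\mathbb{R}^d$, $0<a\le a_0$ and $n\ge\max(2a_0,1)$ with $B(x,a)\subset B(n)$, and every $q\ge 1$, $$\mathbb{E}\big(|M(\mathcal{P}\cap B(n))-M(\mathcal{P}\cap[B(n)\setminus B(x,a)])|^q\big)\le C_q,$$ where $C_q$ depends only on $a_0$, $d$ and $q$.
   Context: For a finite set $X\subset\mathbb{R}^d$, $M(X)$ is the total length of a minimal spanning tree of the complete graph on $X$ with Euclidean edge lengths. $B(x,r)=x+[-r,r]^d$ and $B(r)=B(0,r)$. *)

theory Defs
  imports "HOL-Probability.Probability"
begin

definition cube :: "'b::euclidean_space \<Rightarrow> real \<Rightarrow> 'b set" where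
  "cube x r = cbox (x - r *\<^sub>R One) (x + r *\<^sub>R One)"

definition graph_edges :: "'b set \<Rightarrow> 'b set set" where
  "graph_edges X = {{u, v} | u v. u \<in> X \<and> v \<in> X \<and> u \<noteq> v}"

definition graph_connected :: "'b set \<Rightarrow> 'b set set \<Rightarrow> bool" where
  "graph_connected X E \<longleftrightarrow>
     (\<forall>u\<in>X. \<forall>v\<in>X. (u, v) \<in> {(a, b). {a, b} \<in> E}\<^sup>*)"

definition spanning_tree :: "'b set \<Rightarrow> 'b set set \<Rightarrow> bool" where
  "spanning_tree X E \<longleftrightarrow> E \<subseteq> graph_edges X \<and> graph_connected X E \<and>
     (\<forall>e\<in>E. \<not> graph_connected X (E - {e}))"

text \<open>Total length of a minimal spanning tree, Euclidean edge lengths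
  (the diameter of the edge {u,v} is dist u v).\<close>
definition MST_len :: "'b::euclidean_space set \<Rightarrow> real" where
  "MST_len X = Min {(\<Sum>e\<in>E. diameter e) | E. spanning_tree X E}"

definition poisson_pp :: "'a measure \<Rightarrow> ('a \<Rightarrow> 'b::euclidean_space set) \<Rightarrow> bool" where
  "poisson_pp M P \<longleftrightarrow> prob_space M \<and>
     (\<forall>\<omega>\<in>space M. \<forall>A. bounded A \<longrightarrow> finite (P \<omega> \<inter> A)) \<and>
     (\<forall>A. A \<in> sets lborel \<and> bounded A \<longrightarrow>
        (\<lambda>\<omega>. card (P \<omega> \<inter> A)) \<in> measurable M (count_space UNIV) \<and>
        (\<forall>k::nat. measure M {\<omega> \<in> space M. card (P \<omega> \<inter> A) = k} =
           (measure lborel A) ^ k / fact k * exp (- measure lborel A))) \<and>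
     (\<forall>(I::nat set) (A::nat \<Rightarrow> 'b set). finite I \<and> (\<forall>i\<in>I. A i \<in> sets lborel \<and> bounded (A i))
        \<and> disjoint_family_on A I \<longrightarrow>
        prob_space.indep_vars M (\<lambda>_. count_space UNIV) (\<lambda>i \<omega>. card (P \<omega> \<inter> A i)) I)"

end

theory Submission
  imports Defs
begin

text \<open>
  Let \<open>L\<close> be the longest edge of a minimal spanning tree of \<open>X = P \<inter> B(n)\<close> that leaves the
  cube \<open>B(x, a)\<close>. A minimal tree with the cube, or without it, becomes a connected graph for the
  other configuration after attaching the affected points to a nearby hub, so \<open>M(X)\<close> changes by
  at most \<open>N \<cdot> O(L + a)\<close>, where \<open>N\<close> counts the points within distance \<open>a + L\<close> of \<open>x\<close>.
  An edge of a minimal spanning tree has an empty lune; if \<open>L \<ge> 12 d m\<close>, this lune contains an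
  empty cube of side \<open>m\<close> from a fixed grid near \<open>x\<close>, which for a Poisson process has probability
  \<open>O(exp (- m ^ d))\<close>. On that event the Poisson count \<open>N\<close>, of mean \<open>O(m ^ d)\<close>, still has
  \<open>q\<close>-th moment \<open>O(exp (- m ^ d / 4))\<close>, and summing over the scales \<open>m\<close> gives a bound
  independent of \<open>n\<close>, \<open>x\<close> and \<open>a\<close>.
\<close>

section \<open>Minimal spanning trees\<close>

definition edges_length :: "'b::euclidean_space set set \<Rightarrow> real" where
  "edges_length E = (\<Sum>e\<in>E. diameter e)"

definition adjacency :: "'b set set \<Rightarrow> ('b \<times> 'b) set" where
  "adjacency E = {(a, b). {a, b} \<in> E}"

lemma diameter_doubleton: "diameter {u, v::'b::euclidean_space} = dist u v"
proof (rule antisym)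
  show "diameter {u, v} \<le> dist u v"
    by (rule diameter_le) (auto simp: dist_norm norm_minus_commute)
  show "dist u v \<le> diameter {u, v}"
    by (rule diameter_bounded_bound) auto
qed

lemma graph_edges_mono: "X \<subseteq> Y \<Longrightarrow> graph_edges X \<subseteq> graph_edges Y"
  unfolding graph_edges_def by blast

lemma doubleton_in_graph_edges: "u \<in> X \<Longrightarrow> v \<in> X \<Longrightarrow> u \<noteq> v \<Longrightarrow> {u, v} \<in> graph_edges X"
  unfolding graph_edges_def by blast

lemma finite_graph_edges: "finite X \<Longrightarrow> finite (graph_edges X)"
  by (rule finite_subset[of _ "Pow X"]) (auto simp: graph_edges_def)

lemma finite_edge: "e \<in> graph_edges X \<Longrightarrow> finite e"
  unfolding graph_edges_def by auto

lemma edges_length_nonneg: "E \<subseteq> graph_edges X \<Longrightarrow> 0 \<le> edges_length E"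
  unfolding edges_length_def
  by (intro sum_nonneg diameter_ge_0 finite_imp_bounded) (auto dest: finite_edge)

lemma edges_length_mono:
  "E \<subseteq> F \<Longrightarrow> F \<subseteq> graph_edges X \<Longrightarrow> finite X \<Longrightarrow> edges_length E \<le> edges_length F"
  unfolding edges_length_def
  by (intro sum_mono2 diameter_ge_0 finite_imp_bounded)
     (auto dest: finite_edge intro: finite_subset[OF _ finite_graph_edges])

lemma edges_length_insert_le:
  "finite E \<Longrightarrow> finite e \<Longrightarrow> edges_length (insert e E) \<le> edges_length E + diameter e"
  unfolding edges_length_def
  by (cases "e \<in> E") (simp_all add: insert_absorb diameter_ge_0 finite_imp_bounded)

lemma graph_connected_iff_adjacency:
  "graph_connected X E \<longleftrightarrow> (\<forall>u\<in>X. \<forall>v\<in>X. (u, v) \<in> (adjacency E)\<^sup>*)"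
  unfolding graph_connected_def adjacency_def by simp

lemma adjacency_rtrancl_sym: "(a, b) \<in> (adjacency E)\<^sup>* \<Longrightarrow> (b, a) \<in> (adjacency E)\<^sup>*"
proof -
  have "(adjacency E)\<inverse> = adjacency E" unfolding adjacency_def by (auto simp: insert_commute)
  moreover assume "(a, b) \<in> (adjacency E)\<^sup>*"
  ultimately show ?thesis by (metis rtrancl_converseI)
qed

lemma adjacency_rtrancl_mono:
  "E \<subseteq> F \<Longrightarrow> (a, b) \<in> (adjacency E)\<^sup>* \<Longrightarrow> (a, b) \<in> (adjacency F)\<^sup>*"
  unfolding adjacency_def by (erule rtrancl_mono[THEN subsetD, rotated]) auto

lemma adjacency_rtrancl_edge: "{a, b} \<in> E \<Longrightarrow> (a, b) \<in> (adjacency E)\<^sup>*"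
  unfolding adjacency_def by auto

lemma graph_connected_if_reaches_center:
  assumes "c \<in> X" "\<And>u. u \<in> X \<Longrightarrow> (u, c) \<in> (adjacency E)\<^sup>*"
  shows "graph_connected X E"
  unfolding graph_connected_iff_adjacency by (meson assms adjacency_rtrancl_sym rtrancl_trans)

lemma graph_connected_graph_edges: "graph_connected X (graph_edges X)"
  unfolding graph_connected_iff_adjacency
  by (metis adjacency_rtrancl_edge doubleton_in_graph_edges rtrancl.rtrancl_refl)

lemma spanning_tree_subset:
  assumes "finite X" "E \<subseteq> graph_edges X" "graph_connected X E"
  shows "\<exists>T \<subseteq> E. spanning_tree X T"
  using assms(2,3)
proof (induction "card E" arbitrary: E rule: less_induct)
  case less
  show ?case
  proof (cases "\<forall>e\<in>E. \<not> graph_connected X (E - {e})")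
    case True
    then show ?thesis using less.prems unfolding spanning_tree_def by blast
  next
    case False
    then obtain e where e: "e \<in> E" "graph_connected X (E - {e})" by blast
    have "finite E" using less.prems finite_graph_edges[OF assms(1)] finite_subset by blast
    then have "card (E - {e}) < card E" using e(1) by (rule card_Diff1_less)
    then obtain T where "T \<subseteq> E - {e}" "spanning_tree X T"
      using less.hyps e(2) less.prems(1) by blast
    then show ?thesis by blast
  qed
qed

lemma finite_spanning_tree: "finite X \<Longrightarrow> spanning_tree X T \<Longrightarrow> finite T"
  unfolding spanning_tree_def using finite_graph_edges finite_subset by blast

lemma spanning_tree_edgeD:
  "spanning_tree X T \<Longrightarrow> {y, z} \<in> T \<Longrightarrow> y \<noteq> z \<and> y \<in> X \<and> z \<in> X"
  unfolding spanning_tree_def graph_edges_def by (auto simp: doubleton_eq_iff)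

lemma MST_len_eq_Min: "MST_len X = Min {edges_length E | E. spanning_tree X E}"
  unfolding MST_len_def edges_length_def by simp

lemma finite_spanning_tree_lengths: "finite X \<Longrightarrow> finite {edges_length E | E. spanning_tree X E}"
proof -
  assume "finite X"
  moreover have "{E. spanning_tree X E} \<subseteq> Pow (graph_edges X)"
    unfolding spanning_tree_def by auto
  ultimately have "finite {E. spanning_tree X E}"
    by (meson finite_Pow_iff finite_graph_edges finite_subset)
  then show ?thesis using finite_image_set by blast
qed

lemma MST_len_attained:
  assumes "finite X"
  obtains T where "spanning_tree X T" "MST_len X = edges_length T"
proof -
  have "{edges_length E | E. spanning_tree X E} \<noteq> {}"
    using spanning_tree_subset[OF assms order_refl graph_connected_graph_edges] by blast
  then have "MST_len X \<in> {edges_length E | E. spanning_tree X E}"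
    unfolding MST_len_eq_Min using finite_spanning_tree_lengths[OF assms] by (rule Min_in[rotated])
  then show ?thesis using that by blast
qed

lemma MST_len_le:
  assumes "finite X" "E \<subseteq> graph_edges X" "graph_connected X E"
  shows "MST_len X \<le> edges_length E"
proof -
  obtain T where T: "T \<subseteq> E" "spanning_tree X T"
    using spanning_tree_subset[OF assms] by blast
  have "MST_len X \<le> edges_length T"
    unfolding MST_len_eq_Min using finite_spanning_tree_lengths[OF assms(1)] T(2)
    by (intro Min_le) auto
  also have "\<dots> \<le> edges_length E" using edges_length_mono[OF T(1) assms(2,1)] .
  finally show ?thesis .
qed

lemma MST_len_nonneg: "finite X \<Longrightarrow> 0 \<le> MST_len X"
  by (metis MST_len_attained edges_length_nonneg spanning_tree_def)

lemma MST_len_empty: "MST_len ({}::'b::euclidean_space set) = 0"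
  using MST_len_le[of "{}::'b set" "{}"] MST_len_nonneg[of "{}::'b set"]
  by (simp add: graph_connected_def edges_length_def)

lemma adjacency_rtrancl_remove_edge:
  assumes "(y, u) \<in> (adjacency E)\<^sup>*" "{y, z} \<in> E"
  shows "(y, u) \<in> (adjacency (E - {{y, z}}))\<^sup>* \<or> (z, u) \<in> (adjacency (E - {{y, z}}))\<^sup>*"
  using assms(1)
proof (induction rule: rtrancl_induct)
  case base
  then show ?case by simp
next
  case (step v w)
  then have vw: "{v, w} \<in> E" unfolding adjacency_def by simp
  show ?case
  proof (cases "{v, w} = {y, z}")
    case True
    then have "w = y \<or> w = z" by (auto simp: doubleton_eq_iff)
    then show ?thesis by auto
  next
    case False
    then have "(v, w) \<in> adjacency (E - {{y, z}})" using vw unfolding adjacency_def by simp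
    then show ?thesis using step.IH by (meson rtrancl.rtrancl_into_rtrancl)
  qed
qed

lemma adjacency_rtrancl_crossing_edge:
  assumes "(u, v) \<in> (adjacency E)\<^sup>*" "u \<in> S" "v \<notin> S"
  shows "\<exists>a b. {a, b} \<in> E \<and> a \<in> S \<and> b \<notin> S"
  using assms
proof (induction rule: rtrancl_induct)
  case base
  then show ?case by simp
next
  case (step v w)
  then have "{v, w} \<in> E" unfolding adjacency_def by simp
  then show ?case using step by blast
qed

lemma graph_connected_exchange:
  assumes conn: "graph_connected X T" and e: "{y, z} \<in> T" and y: "y \<in> X"
    and yw: "(y, w) \<in> (adjacency (T - {{y, z}}))\<^sup>*"
  shows "graph_connected X (insert {w, z} (T - {{y, z}}))"
proof (rule graph_connected_if_reaches_center[OF y])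
  let ?R = "T - {{y, z}}"
  let ?E = "insert {w, z} ?R"
  have sub: "?R \<subseteq> ?E" by blast
  fix u assume u: "u \<in> X"
  have "(y, u) \<in> (adjacency T)\<^sup>*" using conn y u unfolding graph_connected_iff_adjacency by blast
  then have "(y, u) \<in> (adjacency ?R)\<^sup>* \<or> (z, u) \<in> (adjacency ?R)\<^sup>*"
    using e by (rule adjacency_rtrancl_remove_edge)
  moreover have "(y, z) \<in> (adjacency ?E)\<^sup>*"
    using adjacency_rtrancl_mono[OF sub yw] adjacency_rtrancl_edge[of w z ?E]
    by (meson insertI1 rtrancl_trans)
  ultimately have "(y, u) \<in> (adjacency ?E)\<^sup>*"
    using adjacency_rtrancl_mono[OF sub] rtrancl_trans by metis
  then show "(u, y) \<in> (adjacency ?E)\<^sup>*" by (rule adjacency_rtrancl_sym)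
qed

lemma MST_edge_le_exchange:
  assumes fin: "finite X" and T: "spanning_tree X T" "MST_len X = edges_length T"
    and e: "{y, z} \<in> T" and pq: "{p, q} \<in> graph_edges X"
    and conn: "graph_connected X (insert {p, q} (T - {{y, z}}))"
  shows "dist y z \<le> dist p q"
proof -
  have fT: "finite T" using fin T(1) by (rule finite_spanning_tree)
  have "insert {p, q} (T - {{y, z}}) \<subseteq> graph_edges X"
    using T(1) pq unfolding spanning_tree_def by auto
  then have "edges_length T \<le> edges_length (insert {p, q} (T - {{y, z}}))"
    using MST_len_le[OF fin _ conn] T(2) by simp
  also have "\<dots> \<le> edges_length (T - {{y, z}}) + dist p q"
    using edges_length_insert_le[of "T - {{y, z}}" "{p, q}"] fT by (simp add: diameter_doubleton)
  also have "edges_length (T - {{y, z}}) = edges_length T - dist y z"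
    unfolding edges_length_def using fT e by (simp add: sum_diff1 diameter_doubleton)
  finally show ?thesis by simp
qed

text \<open>Otherwise \<open>{y, z}\<close> could be exchanged for the shorter edge from \<open>w\<close> to whichever of \<open>y\<close>,
  \<open>z\<close> lies in the other component of \<open>T - {{y, z}}\<close>.\<close>

lemma MST_edge_empty_lune:
  assumes fin: "finite X" and T: "spanning_tree X T" "MST_len X = edges_length T"
    and e: "{y, z} \<in> T" and w: "w \<in> X"
  shows "\<not> (dist w y < dist y z \<and> dist w z < dist y z)"
proof
  assume lune: "dist w y < dist y z \<and> dist w z < dist y z"
  have yz: "y \<in> X" "z \<in> X" using spanning_tree_edgeD[OF T(1) e] by auto
  have conn: "graph_connected X T" using T(1) unfolding spanning_tree_def by blast
  have "(y, w) \<in> (adjacency T)\<^sup>*" using conn yz(1) w unfolding graph_connected_iff_adjacency by blast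
  from adjacency_rtrancl_remove_edge[OF this e]
  consider "(y, w) \<in> (adjacency (T - {{y, z}}))\<^sup>*" | "(z, w) \<in> (adjacency (T - {{z, y}}))\<^sup>*"
    by (auto simp: insert_commute)
  then show False
  proof cases
    case 1
    have "{w, z} \<in> graph_edges X"
      using w yz lune by (intro doubleton_in_graph_edges) (auto simp: dist_commute)
    from MST_edge_le_exchange[OF fin T e this graph_connected_exchange[OF conn e yz(1) 1]]
    show False using lune by simp
  next
    case 2
    have e': "{z, y} \<in> T" using e by (simp add: insert_commute)
    have "{w, y} \<in> graph_edges X" using w yz lune by (intro doubleton_in_graph_edges) auto
    from MST_edge_le_exchange[OF fin T e' this graph_connected_exchange[OF conn e' yz(2) 2]]
    show False using lune by (simp add: dist_commute)
  qed
qed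

lemma edges_length_Un_star_le:
  fixes E :: "'b::euclidean_space set set" and D :: real
  assumes "finite E" "finite A" "\<And>e. e \<in> E \<Longrightarrow> finite e" "\<And>y. y \<in> A \<Longrightarrow> dist y c \<le> D"
  shows "edges_length (E \<union> (\<lambda>y. {y, c}) ` A) \<le> edges_length E + card A * D"
proof -
  let ?F = "(\<lambda>y. {y, c}) ` A"
  have "0 \<le> edges_length (E \<inter> ?F)"
    unfolding edges_length_def using assms(3)
    by (intro sum_nonneg diameter_ge_0 finite_imp_bounded) auto
  then have "edges_length (E \<union> ?F) \<le> edges_length E + edges_length ?F"
    unfolding edges_length_def using assms(1,2) by (simp add: sum_Un)
  also have "edges_length ?F \<le> (\<Sum>y\<in>A. dist y c)"
    unfolding edges_length_def using sum_image_le[of A diameter "\<lambda>y. {y, c}"] assms(2)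
    by (simp add: o_def diameter_doubleton)
  also have "\<dots> \<le> card A * D" using sum_bounded_above[of A "\<lambda>y. dist y c" D] assms(4) by simp
  finally show ?thesis by simp
qed

lemma MST_len_le_attach:
  fixes X :: "'b::euclidean_space set" and D :: real
  assumes fin: "finite X" and c: "c \<in> X" "X - C \<noteq> {} \<Longrightarrow> c \<notin> C"
    and D: "\<And>y. y \<in> X \<inter> C \<Longrightarrow> dist y c \<le> D" "0 \<le> D"
  shows "MST_len X \<le> MST_len (X - C) + card (X \<inter> C) * D"
proof -
  have finZ: "finite (X - C)" using fin by simp
  obtain TZ where TZ: "spanning_tree (X - C) TZ" "MST_len (X - C) = edges_length TZ"
    using MST_len_attained[OF finZ] by blast
  let ?A = "X \<inter> C - {c}"
  let ?E = "TZ \<union> (\<lambda>y. {y, c}) ` ?A"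
  have "TZ \<subseteq> graph_edges X"
    using TZ(1) graph_edges_mono[of "X - C" X] unfolding spanning_tree_def by blast
  then have sub: "?E \<subseteq> graph_edges X"
    using c(1) by (auto intro: doubleton_in_graph_edges)
  have conn: "graph_connected X ?E"
  proof (rule graph_connected_if_reaches_center[OF c(1)])
    fix u assume u: "u \<in> X"
    show "(u, c) \<in> (adjacency ?E)\<^sup>*"
    proof (cases "u \<in> C")
      case True
      then show ?thesis using u by (cases "u = c") (auto intro: adjacency_rtrancl_edge)
    next
      case False
      then have "u \<in> X - C" "c \<in> X - C" using u c by auto
      then have "(u, c) \<in> (adjacency TZ)\<^sup>*"
        using TZ(1) unfolding spanning_tree_def graph_connected_iff_adjacency by blast
      then show ?thesis by (rule adjacency_rtrancl_mono[rotated]) auto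
    qed
  qed
  have "MST_len X \<le> edges_length ?E" using MST_len_le[OF fin sub conn] .
  also have "\<dots> \<le> edges_length TZ + card ?A * D"
  proof (rule edges_length_Un_star_le)
    show "finite TZ" using finZ TZ(1) by (rule finite_spanning_tree)
    show "\<And>e. e \<in> TZ \<Longrightarrow> finite e" using TZ(1) finite_edge unfolding spanning_tree_def by blast
  qed (use fin D in auto)
  also have "card ?A * D \<le> card (X \<inter> C) * D"
    using D(2) fin by (intro mult_right_mono) (auto intro: card_mono)
  finally show ?thesis using TZ(2) by simp
qed

definition crossing_ends :: "'b set set \<Rightarrow> 'b set \<Rightarrow> 'b set \<Rightarrow> 'b set" where
  "crossing_ends T X C = {z \<in> X - C. \<exists>y \<in> X \<inter> C. {y, z} \<in> T}"

text \<open>Collapsing \<open>C\<close> onto the point \<open>z0\<close> maps paths of the tree to paths of the new graph.\<close>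

lemma graph_connected_contract:
  assumes T: "spanning_tree X T" and z0: "z0 \<in> crossing_ends T X C"
  shows "graph_connected (X - C) ({e \<in> T. e \<subseteq> X - C} \<union> (\<lambda>z. {z, z0}) ` (crossing_ends T X C - {z0}))"
    (is "graph_connected _ ?E")
proof -
  let ?S = "crossing_ends T X C"
  define f where "f u = (if u \<in> C then z0 else u)" for u
  have to_z0: "(z, z0) \<in> (adjacency ?E)\<^sup>*" if "z \<in> ?S" for z
    using that by (cases "z = z0") (auto intro: adjacency_rtrancl_edge)
  have "(f u, f v) \<in> (adjacency ?E)\<^sup>*" if "(u, v) \<in> (adjacency T)\<^sup>*" for u v
    using that
  proof (induction rule: rtrancl_induct)
    case (step v w)
    have vw: "{v, w} \<in> T" using step.hyps(2) unfolding adjacency_def by simp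
    have vw_X: "v \<in> X" "w \<in> X" using spanning_tree_edgeD[OF T vw] by auto
    have "w \<in> ?S" if "v \<in> C" "w \<notin> C"
      using that vw_X vw unfolding crossing_ends_def by blast
    moreover have "v \<in> ?S" if "v \<notin> C" "w \<in> C"
      using that vw_X vw unfolding crossing_ends_def by (auto simp: insert_commute)
    moreover have "{v, w} \<in> ?E" if "v \<notin> C" "w \<notin> C"
      using that vw_X vw by blast
    ultimately have "(f v, f w) \<in> (adjacency ?E)\<^sup>*"
      using to_z0 adjacency_rtrancl_sym[OF to_z0] unfolding f_def
      by (cases "v \<in> C"; cases "w \<in> C") (auto intro: adjacency_rtrancl_edge)
    then show ?case using step.IH by (rule rtrancl_trans[rotated])
  qed simp
  then show ?thesis
    using T unfolding spanning_tree_def graph_connected_iff_adjacency f_def by force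
qed

lemma MST_len_Diff_le_contract:
  fixes X :: "'b::euclidean_space set" and D :: real
  assumes fin: "finite X" and T: "spanning_tree X T" and z0: "z0 \<in> crossing_ends T X C"
    and D: "\<And>z. z \<in> crossing_ends T X C \<Longrightarrow> dist z z0 \<le> D" "0 \<le> D"
  shows "MST_len (X - C) \<le> edges_length T + card (crossing_ends T X C) * D"
proof -
  let ?S = "crossing_ends T X C"
  let ?T0 = "{e \<in> T. e \<subseteq> X - C}"
  let ?E = "?T0 \<union> (\<lambda>z. {z, z0}) ` (?S - {z0})"
  have Tsub: "T \<subseteq> graph_edges X" using T unfolding spanning_tree_def by blast
  have S: "?S \<subseteq> X - C" unfolding crossing_ends_def by blast
  have sub: "?E \<subseteq> graph_edges (X - C)"
  proof
    fix e assume "e \<in> ?E"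
    then show "e \<in> graph_edges (X - C)"
    proof
      assume e: "e \<in> ?T0"
      then obtain u v where "e = {u, v}" "u \<noteq> v" using Tsub unfolding graph_edges_def by blast
      then show ?thesis using e by (auto intro: doubleton_in_graph_edges)
    qed (use z0 S in \<open>auto intro: doubleton_in_graph_edges\<close>)
  qed
  have fT: "finite T" using fin T by (rule finite_spanning_tree)
  have "MST_len (X - C) \<le> edges_length ?E"
    using MST_len_le[OF _ sub graph_connected_contract[OF T z0]] fin by simp
  also have "\<dots> \<le> edges_length ?T0 + card (?S - {z0}) * D"
    by (rule edges_length_Un_star_le) (use fT fin S Tsub finite_edge D in \<open>auto dest: finite_subset\<close>)
  also have "edges_length ?T0 \<le> edges_length T" using edges_length_mono[of ?T0 T X] Tsub fin by blast
  also have "card (?S - {z0}) * D \<le> card ?S * D"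
    using D(2) fin S by (intro mult_right_mono) (auto intro: card_mono finite_subset)
  finally show ?thesis by simp
qed

lemma spanning_tree_crossing_edge:
  assumes T: "spanning_tree X T" and "y \<in> X \<inter> C" "z \<in> X - C"
  obtains p b where "{p, b} \<in> T" "p \<in> X \<inter> C" "b \<in> X - C"
proof -
  have "(y, z) \<in> (adjacency T)\<^sup>*"
    using T assms(2,3) unfolding spanning_tree_def graph_connected_iff_adjacency by blast
  then obtain p b where "{p, b} \<in> T" "p \<in> C" "b \<notin> C"
    using adjacency_rtrancl_crossing_edge[of y z T C] assms(2,3) by blast
  then show ?thesis using that spanning_tree_edgeD[OF T] by blast
qed

lemma MST_len_le_Diff_add:
  fixes X :: "'b::euclidean_space set" and \<delta> L :: real
  assumes fin: "finite X" and T: "spanning_tree X T"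
    and \<delta>: "\<And>u v. u \<in> X \<inter> C \<Longrightarrow> v \<in> X \<inter> C \<Longrightarrow> dist u v \<le> \<delta>"
    and L: "\<And>y z. y \<in> X \<inter> C \<Longrightarrow> z \<in> X - C \<Longrightarrow> {y, z} \<in> T \<Longrightarrow> dist y z \<le> L"
    and nonneg: "0 \<le> \<delta>" "0 \<le> L"
  shows "MST_len X \<le> MST_len (X - C) + card (X \<inter> C) * (\<delta> + L)"
proof (cases "X \<inter> C = {}")
  case True
  then show ?thesis by (simp add: Diff_triv)
next
  case False
  then obtain y0 where y0: "y0 \<in> X \<inter> C" by blast
  obtain c where c: "c \<in> X" "X - C \<noteq> {} \<Longrightarrow> c \<notin> C" "\<And>y. y \<in> X \<inter> C \<Longrightarrow> dist y c \<le> \<delta> + L"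
  proof (cases "X - C = {}")
    case True
    have "dist y y0 \<le> \<delta> + L" if "y \<in> X \<inter> C" for y
      using \<delta>[OF that y0] nonneg by linarith
    then show ?thesis using that[of y0] y0 True by blast
  next
    case False
    then obtain p b where pb: "{p, b} \<in> T" "p \<in> X \<inter> C" "b \<in> X - C"
      using spanning_tree_crossing_edge[OF T y0] by blast
    have "dist y b \<le> \<delta> + L" if "y \<in> X \<inter> C" for y
      using dist_triangle[of y b p] \<delta>[OF that pb(2)] L[OF pb(2,3,1)] by linarith
    then show ?thesis using that[of b] pb by blast
  qed
  then show ?thesis using MST_len_le_attach[OF fin c(1,2)] nonneg by fastforce
qed

lemma MST_len_Diff_le_add:
  fixes X :: "'b::euclidean_space set" and \<delta> L :: real
  assumes fin: "finite X" and T: "spanning_tree X T" "MST_len X = edges_length T"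
    and \<delta>: "\<And>u v. u \<in> X \<inter> C \<Longrightarrow> v \<in> X \<inter> C \<Longrightarrow> dist u v \<le> \<delta>"
    and L: "\<And>y z. y \<in> X \<inter> C \<Longrightarrow> z \<in> X - C \<Longrightarrow> {y, z} \<in> T \<Longrightarrow> dist y z \<le> L"
    and nonneg: "0 \<le> \<delta>" "0 \<le> L"
  shows "MST_len (X - C) \<le> MST_len X + card (crossing_ends T X C) * (2 * L + \<delta>)"
proof -
  consider "X \<inter> C = {}" | "X - C = {}" | y0 z0 where "y0 \<in> X \<inter> C" "z0 \<in> X - C" by blast
  then show ?thesis
  proof cases
    case 1
    then show ?thesis using nonneg by (simp add: Diff_triv)
  next
    case 2
    then have "MST_len (X - C) = 0" by (simp only: MST_len_empty)
    then show ?thesis using nonneg MST_len_nonneg[OF fin] by simp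
  next
    case 3
    then obtain p b where pb: "{p, b} \<in> T" "p \<in> X \<inter> C" "b \<in> X - C"
      using spanning_tree_crossing_edge[OF T(1)] by blast
    then have b: "b \<in> crossing_ends T X C" unfolding crossing_ends_def by blast
    have "dist z b \<le> 2 * L + \<delta>" if z: "z \<in> crossing_ends T X C" for z
    proof -
      obtain y where y: "y \<in> X \<inter> C" "z \<in> X - C" "{y, z} \<in> T"
        using z unfolding crossing_ends_def by blast
      have "dist z y \<le> L" using L[OF y] by (simp add: dist_commute)
      then show ?thesis
        using dist_triangle[of z b y] dist_triangle[of y b p] L[OF pb(2,3,1)] \<delta>[OF y(1) pb(2)]
        by linarith
    qed
    then show ?thesis using MST_len_Diff_le_contract[OF fin T(1) b] nonneg T(2) by fastforce
  qed
qed

section \<open>Removing a cube\<close>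

lemma mem_cube: "v \<in> cube x r \<longleftrightarrow> (\<forall>i\<in>Basis. \<bar>v \<bullet> i - x \<bullet> i\<bar> \<le> r)"
  unfolding cube_def mem_box by (auto simp: inner_simps abs_le_iff algebra_simps)

lemma cube_mono: "r \<le> s \<Longrightarrow> cube x r \<subseteq> cube x s"
  unfolding mem_cube subset_iff by force

lemma bounded_cube [simp]: "bounded (cube x r)"
  unfolding cube_def by simp

lemma cube_in_sets_lborel [simp]: "cube x r \<in> sets lborel"
  unfolding cube_def by simp

lemma measure_cube: "0 \<le> r \<Longrightarrow> measure lborel (cube (x::'b::euclidean_space) r) = (2 * r) ^ DIM('b)"
  unfolding cube_def by (simp add: measure_lborel_cbox_eq inner_simps)

lemma dist_le_cube:
  fixes u v :: "'b::euclidean_space"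
  assumes "u \<in> cube x r" "v \<in> cube x r"
  shows "dist u v \<le> 2 * r * DIM('b)"
proof -
  have "dist u v \<le> (\<Sum>i\<in>Basis. \<bar>u \<bullet> i - v \<bullet> i\<bar>)"
    unfolding dist_norm using norm_le_l1[of "u - v"] by (simp add: inner_simps)
  also have "\<dots> \<le> (\<Sum>i\<in>(Basis::'b set). 2 * r)"
  proof (rule sum_mono)
    fix i :: 'b assume "i \<in> Basis"
    then have "\<bar>u \<bullet> i - x \<bullet> i\<bar> \<le> r" "\<bar>v \<bullet> i - x \<bullet> i\<bar> \<le> r" using assms unfolding mem_cube by auto
    then show "\<bar>u \<bullet> i - v \<bullet> i\<bar> \<le> 2 * r" by linarith
  qed
  finally show ?thesis by (simp add: algebra_simps)
qed

lemma mem_cube_add_dist: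
  assumes "y \<in> cube x r" "dist y z \<le> L"
  shows "z \<in> cube x (r + L)"
  unfolding mem_cube
proof
  fix i :: 'a assume i: "i \<in> Basis"
  have "\<bar>(z - y) \<bullet> i\<bar> \<le> L"
    using Basis_le_norm[OF i, of "z - y"] assms(2) by (simp add: dist_norm norm_minus_commute)
  moreover have "\<bar>y \<bullet> i - x \<bullet> i\<bar> \<le> r" using assms(1) i unfolding mem_cube by auto
  ultimately show "\<bar>z \<bullet> i - x \<bullet> i\<bar> \<le> r + L" by (simp add: inner_simps)
qed

text \<open>\<open>L\<close> is the longest edge of a minimal spanning tree from a point in the cube to a point
  outside; only points within distance \<open>a + L\<close> of \<open>x\<close> are involved in repairing the tree.\<close>

lemma MST_len_remove_cube_le:
  fixes X :: "'b::euclidean_space set" and a :: real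
  assumes fin: "finite X" and a: "0 \<le> a"
  obtains L where "0 \<le> L"
    "\<bar>MST_len X - MST_len (X - cube x a)\<bar> \<le> card (X \<inter> cube x (a + L)) * (2 * L + 2 * a * DIM('b))"
    "L = 0 \<or> (\<exists>y\<in>X \<inter> cube x a. \<exists>z\<in>X. dist y z = L \<and> (\<forall>w\<in>X. \<not> (dist w y < L \<and> dist w z < L)))"
proof -
  define C where "C = cube x a"
  define \<delta> where "\<delta> = 2 * a * DIM('b)"
  obtain T where T: "spanning_tree X T" "MST_len X = edges_length T"
    using MST_len_attained[OF fin] by blast
  define Ls where "Ls = {dist y z | y z. y \<in> X \<inter> C \<and> z \<in> X - C \<and> {y, z} \<in> T}"
  have "Ls \<subseteq> (\<lambda>(y, z). dist y z) ` (X \<times> X)" unfolding Ls_def by auto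
  then have fLs: "finite Ls" using fin by (meson finite_SigmaI finite_imageI finite_subset)
  define L where "L = Max (insert 0 Ls)"
  have L0: "0 \<le> L" unfolding L_def using fLs by simp
  have L: "dist y z \<le> L" if "y \<in> X \<inter> C" "z \<in> X - C" "{y, z} \<in> T" for y z
    unfolding L_def using fLs that by (intro Max_ge) (auto simp: Ls_def)
  have lune: "L = 0 \<or> (\<exists>y\<in>X \<inter> C. \<exists>z\<in>X. dist y z = L \<and> (\<forall>w\<in>X. \<not> (dist w y < L \<and> dist w z < L)))"
  proof -
    have "L \<in> insert 0 Ls" unfolding L_def using fLs by (intro Max_in) auto
    then show ?thesis
      unfolding Ls_def using MST_edge_empty_lune[OF fin T] by blast
  qed
  have \<delta>: "dist u v \<le> \<delta>" if "u \<in> X \<inter> C" "v \<in> X \<inter> C" for u v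
    using dist_le_cube that unfolding C_def \<delta>_def by blast
  have \<delta>0: "0 \<le> \<delta>" unfolding \<delta>_def using a by simp
  let ?N = "card (X \<inter> cube x (a + L))"
  have "card (X \<inter> C) \<le> ?N"
    using fin cube_mono[of a "a + L" x] L0 unfolding C_def by (intro card_mono) auto
  then have up: "MST_len X \<le> MST_len (X - C) + ?N * (2 * L + \<delta>)"
    using MST_len_le_Diff_add[OF fin T(1) \<delta> L \<delta>0 L0] L0 \<delta>0
    by (smt (verit) mult_mono of_nat_0_le_iff of_nat_mono)
  have "crossing_ends T X C \<subseteq> X \<inter> cube x (a + L)"
    unfolding crossing_ends_def C_def using L by (auto intro: mem_cube_add_dist simp: C_def)
  then have "card (crossing_ends T X C) \<le> ?N" using fin by (intro card_mono) auto
  then have down: "MST_len (X - C) \<le> MST_len X + ?N * (2 * L + \<delta>)"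
    using MST_len_Diff_le_add[OF fin T \<delta> L \<delta>0 L0] L0 \<delta>0
    by (smt (verit) mult_right_mono of_nat_mono)
  show ?thesis using that[OF L0] up down lune unfolding C_def \<delta>_def by fastforce
qed

section \<open>Empty lunes contain empty grid cells\<close>

definition cell :: "real \<Rightarrow> ('b \<Rightarrow> int) \<Rightarrow> 'b::euclidean_space set" where
  "cell k j = cbox (\<Sum>i\<in>Basis. (of_int (j i) * k) *\<^sub>R i) (\<Sum>i\<in>Basis. (of_int (j i + 1) * k) *\<^sub>R i)"

definition grid_window :: "'b::euclidean_space \<Rightarrow> real \<Rightarrow> real \<Rightarrow> 'b \<Rightarrow> int set" where
  "grid_window x r k i = {\<lceil>(x \<bullet> i - r) / k\<rceil> .. \<lfloor>(x \<bullet> i + r) / k\<rfloor>}"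

lemma mem_cell: "v \<in> cell k j \<longleftrightarrow> (\<forall>i\<in>Basis. of_int (j i) * k \<le> v \<bullet> i \<and> v \<bullet> i \<le> of_int (j i + 1) * k)"
  unfolding cell_def mem_box by (simp add: inner_sum_left inner_Basis if_distrib sum.delta cong: if_cong)

lemma cell_in_sets_lborel [simp]: "cell k j \<in> sets lborel"
  and bounded_cell [simp]: "bounded (cell k j)"
  unfolding cell_def by simp_all

lemma measure_cell: "0 \<le> k \<Longrightarrow> measure lborel (cell k (j::'b::euclidean_space \<Rightarrow> int)) = k ^ DIM('b)"
  unfolding cell_def
  by (simp add: measure_lborel_cbox_eq inner_sum_left inner_Basis if_distrib sum.delta algebra_simps
        cong: if_cong)

lemma cell_restrict_Basis: "cell k (restrict j Basis) = cell k j"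
  unfolding cell_def by (intro arg_cong2[where f=cbox] sum.cong) auto

lemma mem_grid_window: "0 < k \<Longrightarrow> j \<in> grid_window x r k i \<longleftrightarrow> \<bar>of_int j * k - x \<bullet> i\<bar> \<le> r"
  unfolding grid_window_def by (auto simp: ceiling_le_iff le_floor_iff field_simps abs_le_iff)

lemma card_grid_window_le:
  assumes "0 < k" "0 \<le> r"
  shows "real (card (grid_window x r k i)) \<le> 2 * r / k + 1"
proof -
  have "(x \<bullet> i - r) / k \<le> (x \<bullet> i + r) / k" using assms by (simp add: divide_right_mono)
  then have "real (card (grid_window x r k i)) \<le> (x \<bullet> i + r) / k - (x \<bullet> i - r) / k + 1"
    unfolding grid_window_def by (simp, linarith)
  also have "\<dots> = 2 * r / k + 1" using assms by (simp add: field_simps)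
  finally show ?thesis .
qed

lemma card_grid_cells_le:
  fixes x :: "'b::euclidean_space" and a0 k :: real
  defines "d \<equiv> real DIM('b)"
  assumes k: "1 \<le> k" and a0: "0 \<le> a0"
  shows "real (card (Pi\<^sub>E Basis (grid_window x (a0 + 7 * d * k) k))) \<le> (2 * a0 + 14 * d + 1) ^ DIM('b)"
proof -
  have "real (card (Pi\<^sub>E Basis (grid_window x (a0 + 7 * d * k) k)))
      = (\<Prod>i\<in>Basis. real (card (grid_window x (a0 + 7 * d * k) k i)))"
    by (simp add: card_PiE)
  also have "\<dots> \<le> (\<Prod>i\<in>(Basis::'b set). 2 * a0 + 14 * d + 1)"
  proof (rule prod_mono)
    fix i :: 'b
    have "0 \<le> a0 + 7 * d * k" using a0 k unfolding d_def by simp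
    then have "real (card (grid_window x (a0 + 7 * d * k) k i)) \<le> 2 * (a0 + 7 * d * k) / k + 1"
      using k by (intro card_grid_window_le) auto
    also have "\<dots> = 2 * a0 / k + 14 * d + 1" using k by (simp add: field_simps)
    also have "2 * a0 / k \<le> 2 * a0" using k a0 by (simp add: divide_le_eq mult_le_cancel_left1)
    finally show "0 \<le> real (card (grid_window x (a0 + 7 * d * k) k i))
        \<and> real (card (grid_window x (a0 + 7 * d * k) k i)) \<le> 2 * a0 + 14 * d + 1" by simp
  qed
  finally show ?thesis by simp
qed

lemma exists_cell_in_cubes:
  fixes p :: "'b::euclidean_space" and k n :: real
  assumes k: "0 < k" "2 * k \<le> n" and p: "p \<in> cube 0 n"
  obtains j where "cell k j \<subseteq> cube 0 n" "cell k j \<subseteq> cube p (2 * k)"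
    "\<And>i. i \<in> Basis \<Longrightarrow> \<bar>of_int (j i) * k - p \<bullet> i\<bar> \<le> 2 * k"
proof -
  define lo where "lo i = (if p \<bullet> i \<le> 0 then p \<bullet> i else p \<bullet> i - 2 * k)" for i
  define j where "j i = \<lceil>lo i / k\<rceil>" for i
  have j: "lo i \<le> of_int (j i) * k" "of_int (j i + 1) * k \<le> lo i + 2 * k" for i
  proof -
    have "lo i / k \<le> of_int (j i)" "of_int (j i) < lo i / k + 1" unfolding j_def by linarith+
    then show "lo i \<le> of_int (j i) * k" "of_int (j i + 1) * k \<le> lo i + 2 * k"
      using k by (auto simp: field_simps)
  qed
  have lo: "-n \<le> lo i" "lo i + 2 * k \<le> n" "p \<bullet> i - 2 * k \<le> lo i" "lo i \<le> p \<bullet> i"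
    if "i \<in> Basis" for i
  proof -
    have "\<bar>p \<bullet> i\<bar> \<le> n" using p that unfolding mem_cube by simp
    then show "-n \<le> lo i" "lo i + 2 * k \<le> n" "p \<bullet> i - 2 * k \<le> lo i" "lo i \<le> p \<bullet> i"
      using k unfolding lo_def by auto
  qed
  have "cell k j \<subseteq> cube 0 n \<inter> cube p (2 * k)"
  proof
    fix v assume v: "v \<in> cell k j"
    have "\<bar>v \<bullet> i\<bar> \<le> n \<and> \<bar>v \<bullet> i - p \<bullet> i\<bar> \<le> 2 * k" if i: "i \<in> Basis" for i
    proof -
      have "lo i \<le> v \<bullet> i" "v \<bullet> i \<le> lo i + 2 * k"
        using v i j[of i] unfolding mem_cell by fastforce+
      then show ?thesis using lo[OF i] by linarith
    qed
    then show "v \<in> cube 0 n \<inter> cube p (2 * k)" unfolding Int_iff mem_cube by auto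
  qed
  moreover have "\<bar>of_int (j i) * k - p \<bullet> i\<bar> \<le> 2 * k" if "i \<in> Basis" for i
    using j[of i] lo[OF that] k by (simp add: algebra_simps abs_le_iff)
  ultimately show ?thesis using that by blast
qed

lemma grid_window_mono: "0 < k \<Longrightarrow> r \<le> s \<Longrightarrow> grid_window x r k i \<subseteq> grid_window x s k i"
  by (auto simp: mem_grid_window)

lemma convex_cube: "convex (cube x r)"
  unfolding cube_def by simp

lemma point_at_dist_on_segment:
  fixes y z :: "'a::real_normed_vector"
  assumes "convex S" "y \<in> S" "z \<in> S" "0 \<le> r" "r \<le> dist y z"
  obtains y' where "y' \<in> S" "dist y y' = r" "dist y' z = dist y z - r"
proof -
  define l where "l = dist y z"
  define y' where "y' = (1 - r / l) *\<^sub>R y + (r / l) *\<^sub>R z"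
  have r: "0 \<le> r / l" "r / l \<le> 1" using assms(4,5) unfolding l_def by (auto simp: divide_le_eq)
  have "y' - y = (r / l) *\<^sub>R (z - y)" "z - y' = (1 - r / l) *\<^sub>R (z - y)"
    unfolding y'_def by (simp_all add: algebra_simps)
  then have "dist y y' = \<bar>r / l\<bar> * norm (z - y)" "dist y' z = \<bar>1 - r / l\<bar> * norm (z - y)"
    by (metis dist_commute dist_norm norm_scaleR)+
  moreover have "norm (z - y) = l" unfolding l_def by (simp add: dist_norm norm_minus_commute)
  moreover have "r / l * l = r" using assms(4,5) unfolding l_def by auto
  moreover have "0 \<le> l" unfolding l_def by simp
  ultimately have "dist y y' = r" "dist y' z = l - r"
    using r assms(4) by (simp_all add: left_diff_distrib abs_of_nonneg)
  moreover have "y' \<in> S" unfolding y'_def using r by (intro convexD_alt assms(1-3))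
  ultimately show ?thesis using that unfolding l_def by blast
qed

text \<open>A point \<open>y'\<close> on the segment from \<open>y\<close> to \<open>z\<close>, at distance \<open>5 d k\<close> from \<open>y\<close>, has its
  whole \<open>2 k\<close>-cube inside the lune of \<open>y\<close> and \<open>z\<close>; that cube contains a grid cell of side \<open>k\<close>.\<close>

lemma empty_lune_contains_empty_cell:
  fixes y z x :: "'b::euclidean_space" and k a n :: real and Q :: "'b set"
  defines "d \<equiv> real DIM('b)"
  assumes k: "0 < k" and y: "y \<in> cube 0 n" "y \<in> cube x a" and z: "z \<in> cube 0 n"
    and far: "12 * d * k \<le> dist y z"
    and lune: "\<And>w. w \<in> Q \<inter> cube 0 n \<Longrightarrow> \<not> (dist w y < dist y z \<and> dist w z < dist y z)"
  shows "\<exists>j. (\<forall>i\<in>Basis. j i \<in> grid_window x (a + 7 * d * k) k i) \<and>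
    cell k j \<subseteq> cube 0 n \<and> Q \<inter> cell k j = {}"
proof -
  define l where "l = dist y z"
  define r where "r = 5 * d * k"
  have d1: "1 \<le> d" unfolding d_def using DIM_positive[where 'a='b] by linarith
  have dk: "0 < d * k" using d1 k by simp
  have r: "0 < r" "r < l" unfolding r_def l_def using far dk by auto
  have "0 \<le> r" "r \<le> dist y z" using r unfolding l_def by auto
  then obtain y' where y'_cube: "y' \<in> cube 0 n" and dist_y': "dist y y' = r" "dist y' z = l - r"
    using point_at_dist_on_segment[OF convex_cube y(1) z] unfolding l_def by blast
  have "12 * d * k \<le> 2 * n * d"
    using far dist_le_cube[OF y(1) z] unfolding d_def by linarith
  then have "2 * k \<le> n" using d1 k by (simp add: algebra_simps)
  then obtain j where j: "cell k j \<subseteq> cube 0 n" "cell k j \<subseteq> cube y' (2 * k)"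
    "\<And>i. i \<in> Basis \<Longrightarrow> \<bar>of_int (j i) * k - y' \<bullet> i\<bar> \<le> 2 * k"
    using exists_cell_in_cubes[OF k _ y'_cube] by blast
  have "j i \<in> grid_window x (a + 7 * d * k) k i" if i: "i \<in> Basis" for i
  proof -
    have "\<bar>(y' - y) \<bullet> i\<bar> \<le> r"
      using Basis_le_norm[OF i, of "y' - y"] dist_y'(1) by (simp add: dist_norm norm_minus_commute)
    moreover have "\<bar>y \<bullet> i - x \<bullet> i\<bar> \<le> a" using y(2) i unfolding mem_cube by simp
    moreover have "2 * k \<le> 2 * d * k" using d1 k by simp
    ultimately show ?thesis
      using j(3)[OF i] unfolding mem_grid_window[OF k] r_def inner_diff_left abs_le_iff by linarith
  qed
  moreover have "Q \<inter> cell k j = {}"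
  proof (rule ccontr)
    assume "Q \<inter> cell k j \<noteq> {}"
    then obtain v where v: "v \<in> Q" "v \<in> cube 0 n" "v \<in> cube y' (2 * k)" using j(1,2) by blast
    have "y' \<in> cube y' (2 * k)" using k unfolding mem_cube by simp
    then have "dist v y' \<le> 4 * d * k"
      using dist_le_cube[OF v(3)] unfolding d_def by (simp add: algebra_simps)
    moreover have "dist y' y = r" using dist_y'(1) by (simp add: dist_commute)
    ultimately have "dist v y < l" "dist v z < l"
      using dist_triangle[of v y y'] dist_triangle[of v z y'] dist_y'(2) far dk
      unfolding r_def l_def by linarith+
    then show False using lune[of v] v unfolding l_def by blast
  qed
  ultimately show ?thesis using j(1) by blast
qed

definition has_empty_cell :: "'b::euclidean_space set \<Rightarrow> 'b \<Rightarrow> real \<Rightarrow> real \<Rightarrow> nat \<Rightarrow> bool" where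
  "has_empty_cell Q x r n m \<longleftrightarrow>
     (\<exists>j\<in>Pi\<^sub>E Basis (grid_window x (r + 7 * real DIM('b) * real m) (real m)).
        cell (real m) j \<subseteq> cube 0 n \<and> Q \<inter> cell (real m) j = {})"

lemma has_empty_cell_if_empty_lune:
  fixes Q :: "'b::euclidean_space set" and m :: nat
  assumes m: "0 < m" and yz: "y \<in> cube 0 n" "y \<in> cube x a" "z \<in> cube 0 n" and a: "a \<le> a0"
    and far: "12 * real DIM('b) * real m \<le> dist y z"
    and lune: "\<And>w. w \<in> Q \<inter> cube 0 n \<Longrightarrow> \<not> (dist w y < dist y z \<and> dist w z < dist y z)"
  shows "has_empty_cell Q x a0 n m"
proof -
  define d where "d = real DIM('b)"
  have m': "0 < real m" using m by simp
  from empty_lune_contains_empty_cell[where Q = Q, OF m' yz far lune]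
  obtain j where j: "\<forall>i\<in>Basis. j i \<in> grid_window x (a + 7 * d * m) m i"
      "cell m j \<subseteq> cube 0 n" "Q \<inter> cell m j = {}"
    unfolding d_def by blast
  have "a + 7 * d * m \<le> a0 + 7 * d * m" using a by simp
  then have "\<forall>i\<in>Basis. j i \<in> grid_window x (a0 + 7 * d * m) m i"
    using j(1) grid_window_mono[OF m'] by blast
  then have "restrict j Basis \<in> Pi\<^sub>E Basis (grid_window x (a0 + 7 * d * m) m)"
    by (simp add: restrict_PiE_iff)
  moreover have "cell m (restrict j Basis) \<subseteq> cube 0 n \<and> Q \<inter> cell m (restrict j Basis) = {}"
    using j(2,3) by (simp add: cell_restrict_Basis)
  ultimately show ?thesis unfolding has_empty_cell_def d_def by blast
qed

text \<open>The scale \<open>m\<close> is the longest tree edge leaving the cube, in units of \<open>12 d\<close>; if it is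
  positive, the empty lune of that edge contains an empty grid cell of side \<open>m\<close>.\<close>

lemma MST_len_remove_cube_le_count:
  fixes Q :: "'b::euclidean_space set" and a a0 n :: real
  defines "d \<equiv> real DIM('b)"
  assumes fin: "\<And>A. bounded A \<Longrightarrow> finite (Q \<inter> A)" and a: "0 < a" "a \<le> a0"
  obtains m :: nat where "m = 0 \<or> has_empty_cell Q x a0 n m"
    "\<bar>MST_len (Q \<inter> cube 0 n) - MST_len (Q \<inter> (cube 0 n - cube x a))\<bar>
       \<le> (24 * d + 2 * a0 * d) * (1 + real m) * card (Q \<inter> cube x (a0 + 12 * d * (real m + 1)))"
proof -
  define X where "X = Q \<inter> cube 0 n"
  have fX: "finite X" unfolding X_def using fin by simp
  have XC: "X - cube x a = Q \<inter> (cube 0 n - cube x a)" unfolding X_def by blast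
  have d1: "1 \<le> d" unfolding d_def using DIM_positive[where 'a='b] by linarith
  obtain L where L0: "0 \<le> L"
    and bound: "\<bar>MST_len X - MST_len (X - cube x a)\<bar> \<le> card (X \<inter> cube x (a + L)) * (2 * L + 2 * a * d)"
    and lune: "L = 0 \<or> (\<exists>y\<in>X \<inter> cube x a. \<exists>z\<in>X. dist y z = L \<and> (\<forall>w\<in>X. \<not> (dist w y < L \<and> dist w z < L)))"
    using MST_len_remove_cube_le[OF fX less_imp_le[OF a(1)], of x] unfolding d_def by blast
  define m where "m = nat \<lfloor>L / (12 * d)\<rfloor>"
  have "0 \<le> L / (12 * d)" using L0 d1 by simp
  then have "real m = of_int \<lfloor>L / (12 * d)\<rfloor>" unfolding m_def by simp
  then have "real m \<le> L / (12 * d)" "L / (12 * d) < real m + 1" by linarith+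
  then have mL: "12 * d * real m \<le> L" "L < 12 * d * (real m + 1)" using d1 by (simp_all add: field_simps)
  define N where "N = card (Q \<inter> cube x (a0 + 12 * d * (real m + 1)))"
  have "X \<inter> cube x (a + L) \<subseteq> Q \<inter> cube x (a0 + 12 * d * (real m + 1))"
    using cube_mono[of "a + L" "a0 + 12 * d * (real m + 1)" x] mL a unfolding X_def by auto
  then have "card (X \<inter> cube x (a + L)) \<le> N" unfolding N_def using fin by (intro card_mono) auto
  moreover have "2 * L + 2 * a * d \<le> (24 * d + 2 * a0 * d) * (1 + real m)"
  proof -
    have "2 * a * d \<le> 2 * a0 * d" using a d1 by simp
    also have "\<dots> \<le> 2 * a0 * d * (1 + real m)" using a d1 by simp
    finally show ?thesis using mL(2) by (simp add: algebra_simps)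
  qed
  ultimately have "card (X \<inter> cube x (a + L)) * (2 * L + 2 * a * d)
      \<le> N * ((24 * d + 2 * a0 * d) * (1 + real m))"
    using L0 a d1 by (intro mult_mono) auto
  then have diff: "\<bar>MST_len X - MST_len (X - cube x a)\<bar> \<le> (24 * d + 2 * a0 * d) * (1 + real m) * N"
    using bound by (simp add: mult.commute)
  have "m = 0 \<or> has_empty_cell Q x a0 n m"
  proof (cases "m = 0")
    case False
    then have "0 < 12 * d * real m" using d1 by simp
    then have "L \<noteq> 0" using mL(1) by linarith
    then obtain y z where yz: "y \<in> X \<inter> cube x a" "z \<in> X" "dist y z = L"
        "\<And>w. w \<in> X \<Longrightarrow> \<not> (dist w y < L \<and> dist w z < L)"
      using lune by blast
    have far: "12 * real DIM('b) * real m \<le> dist y z" using yz(3) mL(1) unfolding d_def by simp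
    have lune': "\<And>w. w \<in> Q \<inter> cube 0 n \<Longrightarrow> \<not> (dist w y < dist y z \<and> dist w z < dist y z)"
      using yz(3,4) unfolding X_def by blast
    have yz_cube: "y \<in> cube 0 n" "y \<in> cube x a" "z \<in> cube 0 n" using yz(1,2) unfolding X_def by auto
    have "has_empty_cell Q x a0 n m"
      using has_empty_cell_if_empty_lune[where Q = Q, OF _ yz_cube a(2) far lune'] False by simp
    then show ?thesis by simp
  qed simp
  with diff show ?thesis using that unfolding XC unfolding X_def N_def by blast
qed

section \<open>Moments of Poisson counts on rare events\<close>

lemma power_div_fact_le_exp:
  fixes y :: real
  assumes "0 \<le> y"
  shows "y ^ p / fact p \<le> exp y"
proof -
  have s: "(\<lambda>n. y ^ n / fact n) sums exp y"
    using exp_converges[of y] by (simp add: divide_inverse mult.commute)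
  have "(\<Sum>n\<in>{p}. y ^ n / fact n) \<le> (\<Sum>n. y ^ n / fact n)"
    by (rule sum_le_suminf) (use s assms in \<open>auto simp: sums_iff\<close>)
  then show ?thesis using s by (simp add: sums_iff)
qed

lemma power_le_fact_mult_exp:
  fixes y s :: real
  assumes "0 \<le> y" "0 < s"
  shows "y ^ p \<le> fact p / s ^ p * exp (s * y)"
proof -
  have "(s * y) ^ p / fact p \<le> exp (s * y)" using power_div_fact_le_exp assms by simp
  then show ?thesis using assms(2) by (simp add: power_mult_distrib field_simps)
qed

lemma powr_le_one_plus_power:
  fixes y q :: real
  assumes "0 \<le> y" "0 \<le> q" "q \<le> real p"
  shows "y powr q \<le> 1 + y ^ p"
proof (cases "y \<le> 1")
  case True
  then have "y powr q \<le> 1" using assms by (simp add: powr_le1)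
  then show ?thesis using zero_le_power[of y p] assms(1) by linarith
next
  case False
  then have "y powr q \<le> y powr real p" using assms by (intro powr_mono) auto
  then show ?thesis using False by (simp add: powr_realpow)
qed

lemma power_add_le_two_power:
  fixes v w :: real
  assumes "0 \<le> v" "0 \<le> w"
  shows "(v + w) ^ k \<le> 2 ^ k * (v ^ k + w ^ k)"
proof -
  have "(v + w) ^ k \<le> (2 * max v w) ^ k" using assms by (intro power_mono) auto
  also have "\<dots> = 2 ^ k * max v w ^ k" by (simp add: power_mult_distrib)
  also have "max v w ^ k \<le> v ^ k + w ^ k" using assms by (cases "v \<le> w") (auto simp: max_def)
  finally show ?thesis by simp
qed

lemma power_scaled_le_split:
  fixes a0 d :: real and k m :: nat
  defines "\<delta> \<equiv> 1 / (2 * (48 * d) ^ k)"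
  assumes "0 \<le> a0" "0 < d"
  shows "(2 * (a0 + 12 * d * (real m + 1))) ^ k * \<delta> \<le> \<delta> * 2 ^ k * (2 * a0 + 24 * d) ^ k + real m ^ k / 2"
proof -
  have "(2 * (a0 + 12 * d * (real m + 1))) ^ k = ((2 * a0 + 24 * d) + 24 * d * real m) ^ k"
    by (simp add: algebra_simps)
  also have "\<dots> \<le> 2 ^ k * ((2 * a0 + 24 * d) ^ k + (24 * d * real m) ^ k)"
    using assms by (intro power_add_le_two_power) auto
  also have "\<dots> = 2 ^ k * (2 * a0 + 24 * d) ^ k + (2 * (24 * d * real m)) ^ k"
    by (simp only: distrib_left power_mult_distrib)
  also have "(2 * (24 * d * real m)) ^ k = (48 * d * real m) ^ k"
    by (rule arg_cong[where f = "\<lambda>t. t ^ k"]) simp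
  also have "\<dots> = (48 * d) ^ k * real m ^ k" by (rule power_mult_distrib)
  finally have "(2 * (a0 + 12 * d * (real m + 1))) ^ k * \<delta>
      \<le> (2 ^ k * (2 * a0 + 24 * d) ^ k + (48 * d) ^ k * real m ^ k) * \<delta>"
    unfolding \<delta>_def using assms by (intro mult_right_mono) auto
  also have "\<dots> = \<delta> * 2 ^ k * (2 * a0 + 24 * d) ^ k + ((48 * d) ^ k * \<delta>) * real m ^ k"
    by (simp add: algebra_simps)
  also have "(48 * d) ^ k * \<delta> = 1 / 2" unfolding \<delta>_def using assms by simp
  finally show ?thesis by simp
qed

lemma one_plus_powr_mult_exp_le:
  fixes q :: real and p m k :: nat
  assumes "0 \<le> q" "q \<le> real p" "1 \<le> k"
  shows "(1 + real m) powr q * exp (- (real m ^ k / 4))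
    \<le> (1 + fact p * 8 ^ p * exp (1 / 8)) * exp (- (real m / 8))"
proof -
  have "real m ^ 1 \<le> real m ^ k" if "m \<noteq> 0" using that assms(3) by (intro power_increasing) auto
  then have "real m \<le> real m ^ k" by (cases "m = 0") auto
  then have "(1 + real m) powr q * exp (- (real m ^ k / 4)) \<le> (1 + real m) powr q * exp (- (real m / 4))"
    by (intro mult_left_mono) auto
  also have "(1 + real m) powr q \<le> 1 + (1 + real m) ^ p" using powr_le_one_plus_power assms by simp
  also have "(1 + real m) ^ p \<le> fact p / (1 / 8) ^ p * exp (1 / 8 * (1 + real m))"
    by (rule power_le_fact_mult_exp) auto
  also have "exp (1 / 8 * (1 + real m)) = exp (1 / 8) * exp (real m / 8)"
    by (simp add: algebra_simps flip: exp_add)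
  also have "(1 + fact p / (1 / 8) ^ p * (exp (1 / 8) * exp (real m / 8))) * exp (- (real m / 4))
      = exp (- (real m / 4)) + fact p * 8 ^ p * exp (1 / 8) * exp (- (real m / 8))"
    by (simp add: algebra_simps power_divide flip: exp_add)
  also have "exp (- (real m / 4)) \<le> exp (- (real m / 8))" by simp
  finally show ?thesis by (simp add: algebra_simps)
qed

lemma summable_exp_neg_div: "0 < c \<Longrightarrow> summable (\<lambda>m::nat. exp (- (real m / c)))"
proof -
  assume "0 < c"
  have "(\<lambda>m::nat. exp (- (real m / c))) = (\<lambda>m. exp (- (1 / c)) ^ m)"
    by (simp add: field_simps flip: exp_of_nat_mult)
  moreover have "summable (\<lambda>m::nat. exp (- (1 / c)) ^ m)" using \<open>0 < c\<close> by (intro summable_geometric) simp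
  ultimately show ?thesis by simp
qed

lemma nn_integral_nat_valued:
  fixes N :: "'a \<Rightarrow> nat" and f :: "nat \<Rightarrow> ennreal"
  assumes N: "N \<in> measurable M (count_space UNIV)"
  shows "(\<integral>\<^sup>+\<omega>. f (N \<omega>) \<partial>M) = (\<Sum>k. f k * emeasure M {\<omega> \<in> space M. N \<omega> = k})"
proof -
  define A where "A k = {\<omega> \<in> space M. N \<omega> = k}" for k
  have A: "A k \<in> sets M" for k
    unfolding A_def using measurable_sets[OF N, of "{k}"] by (simp add: vimage_def Int_def conj_commute)
  have "f (N \<omega>) = (\<Sum>k. f k * indicator (A k) \<omega>)" if "\<omega> \<in> space M" for \<omega>
  proof -
    have "(\<lambda>k. f k * indicator (A k) \<omega>) = (\<lambda>k. if k = N \<omega> then f (N \<omega>) else 0)"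
      using that unfolding A_def by (auto simp: indicator_def)
    then show ?thesis using sums_single[of "N \<omega>" "\<lambda>_. f (N \<omega>)"] by (simp add: sums_iff)
  qed
  then have "(\<integral>\<^sup>+\<omega>. f (N \<omega>) \<partial>M) = (\<integral>\<^sup>+\<omega>. (\<Sum>k. f k * indicator (A k) \<omega>) \<partial>M)"
    by (intro nn_integral_cong) auto
  also have "\<dots> = (\<Sum>k. \<integral>\<^sup>+\<omega>. f k * indicator (A k) \<omega> \<partial>M)"
    using A by (intro nn_integral_suminf) auto
  finally show ?thesis using A unfolding A_def by (simp add: nn_integral_cmult_indicator)
qed

lemma nn_integral_exp_Poisson:
  fixes N :: "'a \<Rightarrow> nat" and lam s :: real
  assumes M: "prob_space M" and N: "N \<in> measurable M (count_space UNIV)" and lam: "0 \<le> lam"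
    and dist: "\<And>k. measure M {\<omega> \<in> space M. N \<omega> = k} = lam ^ k / fact k * exp (- lam)"
  shows "(\<integral>\<^sup>+\<omega>. ennreal (exp (s * real (N \<omega>))) \<partial>M) = ennreal (exp (lam * (exp s - 1)))"
proof -
  have exp_sums: "(\<lambda>k. (lam * exp s) ^ k / fact k) sums exp (lam * exp s)"
    using exp_converges[of "lam * exp s"] by (simp add: divide_inverse mult.commute)
  have "(\<integral>\<^sup>+\<omega>. ennreal (exp (s * real (N \<omega>))) \<partial>M)
      = (\<Sum>k. ennreal (exp (s * real k)) * emeasure M {\<omega> \<in> space M. N \<omega> = k})"
    using N by (rule nn_integral_nat_valued)
  also have "\<dots> = (\<Sum>k. ennreal (exp (- lam) * ((lam * exp s) ^ k / fact k)))"
  proof (intro suminf_cong)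
    fix k
    have "emeasure M {\<omega> \<in> space M. N \<omega> = k} = ennreal (lam ^ k / fact k * exp (- lam))"
      using finite_measure.emeasure_eq_measure[OF prob_space.finite_measure[OF M]] dist by simp
    moreover have "exp (s * real k) = exp s ^ k" by (metis exp_of_nat_mult mult.commute)
    ultimately show "ennreal (exp (s * real k)) * emeasure M {\<omega> \<in> space M. N \<omega> = k}
        = ennreal (exp (- lam) * ((lam * exp s) ^ k / fact k))"
      using lam by (simp add: ennreal_mult'[symmetric] power_mult_distrib field_simps)
  qed
  also have "\<dots> = ennreal (\<Sum>k. exp (- lam) * ((lam * exp s) ^ k / fact k))"
    using lam summable_mult[OF sums_summable[OF exp_sums]] by (intro suminf_ennreal2) auto
  also have "(\<Sum>k. exp (- lam) * ((lam * exp s) ^ k / fact k)) = exp (- lam) * exp (lam * exp s)"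
    using sums_mult[OF exp_sums] by (simp add: sums_iff)
  also have "\<dots> = exp (lam * (exp s - 1))" by (simp add: algebra_simps flip: exp_add)
  finally show ?thesis .
qed

lemma indicator_powr_le_exp:
  fixes i y q eps t :: real and p :: nat
  defines "B \<equiv> fact p / eps ^ p"
  assumes i: "i = 0 \<or> i = 1" and y: "0 \<le> y" and q: "0 \<le> q" "q \<le> real p" and "0 < eps" "0 < t"
  shows "i * y powr q \<le> (1 + B / (2 * t)) * i + B * t / 2 * exp (2 * eps * y)"
proof -
  have B: "0 \<le> B" unfolding B_def using \<open>0 < eps\<close> by simp
  have am: "i * exp (eps * y) \<le> t / 2 * exp (2 * eps * y) + i / (2 * t)"
  proof -
    have "0 \<le> (t * exp (eps * y) - i) ^ 2 / t" using \<open>0 < t\<close> by simp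
    also have "\<dots> = t * exp (eps * y) ^ 2 - 2 * i * exp (eps * y) + i ^ 2 / t"
      using \<open>0 < t\<close> by (simp add: power2_eq_square field_simps)
    also have "i ^ 2 = i" using i by auto
    also have "exp (eps * y) ^ 2 = exp (2 * eps * y)" by (simp flip: exp_of_nat_mult)
    finally show ?thesis using \<open>0 < t\<close> by (simp add: field_simps)
  qed
  have "i * y powr q \<le> i * (1 + B * exp (eps * y))"
    using powr_le_one_plus_power[OF y q] power_le_fact_mult_exp[OF y \<open>0 < eps\<close>, of p] i
    unfolding B_def by auto
  also have "\<dots> = i + B * (i * exp (eps * y))" by (simp add: algebra_simps)
  also have "\<dots> \<le> i + B * (t / 2 * exp (2 * eps * y) + i / (2 * t))"
    using am B by (intro add_left_mono mult_left_mono) auto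
  also have "\<dots> = (1 + B / (2 * t)) * i + B * t / 2 * exp (2 * eps * y)" by (simp add: algebra_simps)
  finally show ?thesis .
qed

text \<open>Pointwise, the integrand is at most a multiple of \<open>1\<^sub>E\<close>, small because \<open>E\<close> is rare, plus a
  multiple of \<open>exp (2 eps N)\<close>, controlled by the Poisson moment generating function.\<close>

lemma nn_integral_indicator_Poisson_powr_le:
  fixes N :: "'a \<Rightarrow> nat" and lam eps t q pE :: real and p :: nat
  defines "B \<equiv> fact p / eps ^ p"
  assumes M: "prob_space M" and N: "N \<in> measurable M (count_space UNIV)" and lam: "0 \<le> lam"
    and dist: "\<And>k. measure M {\<omega> \<in> space M. N \<omega> = k} = lam ^ k / fact k * exp (- lam)"
    and E: "E \<in> sets M" "measure M E \<le> pE"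
    and eps: "0 < eps" and t: "0 < t" and q: "0 \<le> q" "q \<le> real p"
  shows "(\<integral>\<^sup>+\<omega>. ennreal (indicator E \<omega> * real (N \<omega>) powr q) \<partial>M)
     \<le> ennreal ((1 + B / (2 * t)) * pE + B * t / 2 * exp (lam * (exp (2 * eps) - 1)))"
proof -
  define c1 where "c1 = 1 + B / (2 * t)"
  define c2 where "c2 = B * t / 2"
  have c: "0 \<le> c1" "0 \<le> c2" unfolding c1_def c2_def B_def using eps t by auto
  have pE: "0 \<le> pE" using E(2) measure_nonneg[of M E] by linarith
  have "(\<integral>\<^sup>+\<omega>. ennreal (indicator E \<omega> * real (N \<omega>) powr q) \<partial>M)
      \<le> (\<integral>\<^sup>+\<omega>. ennreal c1 * indicator E \<omega> + ennreal c2 * ennreal (exp (2 * eps * real (N \<omega>))) \<partial>M)"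
  proof (rule nn_integral_mono)
    fix \<omega>
    have "indicator E \<omega> * real (N \<omega>) powr q \<le> c1 * indicator E \<omega> + c2 * exp (2 * eps * real (N \<omega>))"
      unfolding c1_def c2_def B_def by (rule indicator_powr_le_exp) (use q eps t in \<open>auto simp: indicator_def\<close>)
    then have "ennreal (indicator E \<omega> * real (N \<omega>) powr q)
        \<le> ennreal (c1 * indicator E \<omega> + c2 * exp (2 * eps * real (N \<omega>)))"
      by (rule ennreal_leI)
    also have "\<dots> = ennreal c1 * indicator E \<omega> + ennreal c2 * ennreal (exp (2 * eps * real (N \<omega>)))"
      using c by (simp add: ennreal_mult' ennreal_indicator)
    finally show "ennreal (indicator E \<omega> * real (N \<omega>) powr q)
        \<le> ennreal c1 * indicator E \<omega> + ennreal c2 * ennreal (exp (2 * eps * real (N \<omega>)))" .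
  qed
  also have "\<dots> = ennreal c1 * emeasure M E + ennreal c2 * (\<integral>\<^sup>+\<omega>. ennreal (exp (2 * eps * real (N \<omega>))) \<partial>M)"
  proof -
    have "(\<lambda>\<omega>. ennreal (exp (2 * eps * real (N \<omega>)))) \<in> borel_measurable M"
      by (rule measurable_compose[OF N]) simp
    then show ?thesis using E(1) by (simp add: nn_integral_add nn_integral_cmult nn_integral_cmult_indicator)
  qed
  also have "\<dots> = ennreal c1 * ennreal (measure M E) + ennreal c2 * ennreal (exp (lam * (exp (2 * eps) - 1)))"
    using nn_integral_exp_Poisson[OF M N lam dist]
      finite_measure.emeasure_eq_measure[OF prob_space.finite_measure[OF M]] by simp
  also have "\<dots> \<le> ennreal c1 * ennreal pE + ennreal c2 * ennreal (exp (lam * (exp (2 * eps) - 1)))"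
    using E(2) by (intro add_mono mult_left_mono ennreal_leI) auto
  also have "\<dots> = ennreal (c1 * pE + c2 * exp (lam * (exp (2 * eps) - 1)))"
  proof -
    have "0 \<le> c1 * pE" "0 \<le> c2 * exp (lam * (exp (2 * eps) - 1))" using c pE by auto
    then show ?thesis using c pE by (simp add: ennreal_mult')
  qed
  finally show ?thesis unfolding c1_def c2_def .
qed

text \<open>The choice \<open>t = exp (- 3 u / 4)\<close> balances the two parts.\<close>

lemma nn_integral_indicator_Poisson_powr_le_exp:
  fixes N :: "'a \<Rightarrow> nat" and lam \<delta> G A0 u q :: real and p :: nat
  defines "B \<equiv> fact p / (ln (1 + \<delta>) / 2) ^ p"
  assumes M: "prob_space M" and N: "N \<in> measurable M (count_space UNIV)" and lam: "0 \<le> lam"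
    and dist: "\<And>k. measure M {\<omega> \<in> space M. N \<omega> = k} = lam ^ k / fact k * exp (- lam)"
    and E: "E \<in> sets M" "measure M E \<le> G * exp (- u)"
    and G: "0 \<le> G" and u: "0 \<le> u" and \<delta>: "0 < \<delta>" and lam_\<delta>: "lam * \<delta> \<le> A0 + u / 2"
    and q: "0 \<le> q" "q \<le> real p"
  shows "(\<integral>\<^sup>+\<omega>. ennreal (indicator E \<omega> * real (N \<omega>) powr q) \<partial>M)
     \<le> ennreal ((G + B * G / 2 + B / 2 * exp A0) * exp (- (u / 4)))"
proof -
  define t where "t = exp (- (3 * u / 4))"
  have eps: "0 < ln (1 + \<delta>) / 2" "exp (2 * (ln (1 + \<delta>) / 2)) - 1 = \<delta>" using \<delta> by simp_all
  have B: "0 \<le> B" unfolding B_def using eps by simp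
  have "(\<integral>\<^sup>+\<omega>. ennreal (indicator E \<omega> * real (N \<omega>) powr q) \<partial>M)
      \<le> ennreal ((1 + B / (2 * t)) * (G * exp (- u)) + B * t / 2 * exp (lam * \<delta>))"
    using nn_integral_indicator_Poisson_powr_le[OF M N lam dist E eps(1) _ q, of t] eps(2)
    unfolding B_def t_def by simp
  also have "\<dots> \<le> ennreal ((G + B * G / 2 + B / 2 * exp A0) * exp (- (u / 4)))"
  proof (rule ennreal_leI)
    have "exp (- u) / t = exp (- (u / 4))" "t * exp (A0 + u / 2) = exp A0 * exp (- (u / 4))"
      unfolding t_def by (simp_all flip: exp_diff exp_add)
    moreover have "B / (2 * t) * (G * exp (- u)) = B * G / 2 * (exp (- u) / t)"
      "B * t / 2 * exp (A0 + u / 2) = B / 2 * (t * exp (A0 + u / 2))" by simp_all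
    ultimately have "B / (2 * t) * (G * exp (- u)) = B * G / 2 * exp (- (u / 4))"
      "B * t / 2 * exp (A0 + u / 2) = B / 2 * exp A0 * exp (- (u / 4))" by simp_all
    moreover have "G * exp (- u) \<le> G * exp (- (u / 4))" using G u by (intro mult_left_mono) auto
    moreover have "B * t / 2 * exp (lam * \<delta>) \<le> B * t / 2 * exp (A0 + u / 2)"
      using B lam_\<delta> unfolding t_def by (intro mult_left_mono) auto
    moreover have "(1 + B / (2 * t)) * (G * exp (- u))
        = G * exp (- u) + B / (2 * t) * (G * exp (- u))" by (simp add: distrib_right)
    moreover have "(G + B * G / 2 + B / 2 * exp A0) * exp (- (u / 4))
        = G * exp (- (u / 4)) + B * G / 2 * exp (- (u / 4)) + B / 2 * exp A0 * exp (- (u / 4))"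
      by (simp add: distrib_right)
    ultimately show "(1 + B / (2 * t)) * (G * exp (- u)) + B * t / 2 * exp (lam * \<delta>)
        \<le> (G + B * G / 2 + B / 2 * exp A0) * exp (- (u / 4))"
      by linarith
  qed
  finally show ?thesis .
qed

section \<open>The Poisson point process\<close>

lemma poisson_ppD:
  assumes "poisson_pp M P"
  shows "prob_space M" "\<And>\<omega> A. \<omega> \<in> space M \<Longrightarrow> bounded A \<Longrightarrow> finite (P \<omega> \<inter> A)"
    and "\<And>A. A \<in> sets lborel \<Longrightarrow> bounded A \<Longrightarrow> (\<lambda>\<omega>. card (P \<omega> \<inter> A)) \<in> measurable M (count_space UNIV)"
    and "\<And>A k. A \<in> sets lborel \<Longrightarrow> bounded A \<Longrightarrow>
      measure M {\<omega> \<in> space M. card (P \<omega> \<inter> A) = k} = measure lborel A ^ k / fact k * exp (- measure lborel A)"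
  using assms unfolding poisson_pp_def by auto

text \<open>Scale \<open>0\<close> stands for ``no long tree edge leaves the cube''; its event is the whole
  space (grid cells of side \<open>0\<close> are degenerate).\<close>

definition empty_cell_event :: "'a measure \<Rightarrow> ('a \<Rightarrow> 'b::euclidean_space set) \<Rightarrow> 'b \<Rightarrow> real \<Rightarrow> real \<Rightarrow> nat \<Rightarrow> 'a set" where
  "empty_cell_event M P x r n m = {\<omega> \<in> space M. m = 0 \<or> has_empty_cell (P \<omega>) x r n m}"

text \<open>A cell of side \<open>m\<close> is empty with probability \<open>exp (- m ^ d)\<close>; the union bound runs
  over the boundedly many cells of the window.\<close>

lemma empty_cell_event:
  fixes P :: "'a \<Rightarrow> 'b::euclidean_space set" and a0 :: real
  defines "d \<equiv> real DIM('b)"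
  assumes pp: "poisson_pp M P" and a0: "0 \<le> a0"
  shows "empty_cell_event M P x a0 n m \<in> sets M"
    and "measure M (empty_cell_event M P x a0 n m) \<le> (2 * a0 + 14 * d + 1) ^ DIM('b) * exp (- (real m ^ DIM('b)))"
proof -
  have G: "1 \<le> (2 * a0 + 14 * d + 1) ^ DIM('b)" using a0 unfolding d_def by simp
  have "empty_cell_event M P x a0 n m \<in> sets M \<and>
    measure M (empty_cell_event M P x a0 n m) \<le> (2 * a0 + 14 * d + 1) ^ DIM('b) * exp (- (real m ^ DIM('b)))"
  proof (cases "m = 0")
    case True
    then show ?thesis
      using G prob_space.prob_space[OF poisson_ppD(1)[OF pp]] by (simp add: empty_cell_event_def power_0_left)
  next
    case False
    define J where "J = Pi\<^sub>E Basis (grid_window x (a0 + 7 * d * m) m)"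
    define A where "A j = {\<omega> \<in> space M. card (P \<omega> \<inter> cell m j) = 0}" for j
    have "finite J" unfolding J_def grid_window_def by (intro finite_PiE) auto
    have A: "A j \<in> sets M" for j
      using measurable_sets[OF poisson_ppD(3)[OF pp cell_in_sets_lborel bounded_cell], of "{0}"]
      unfolding A_def by (simp add: vimage_def Int_def conj_commute)
    have "measure M (A j) = exp (- (real m ^ DIM('b)))" for j
      using poisson_ppD(4)[OF pp cell_in_sets_lborel bounded_cell, of m j 0] measure_cell[of m j]
      unfolding A_def by simp
    moreover have "empty_cell_event M P x a0 n m = (\<Union>j\<in>{j \<in> J. cell m j \<subseteq> cube 0 n}. A j)"
      using False poisson_ppD(2)[OF pp _ bounded_cell]
      unfolding empty_cell_event_def has_empty_cell_def J_def A_def d_def by (auto; blast)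
    ultimately have "empty_cell_event M P x a0 n m \<in> sets M \<and>
      measure M (empty_cell_event M P x a0 n m) \<le> real (card {j \<in> J. cell m j \<subseteq> cube 0 n}) * exp (- (real m ^ DIM('b)))"
      using measure_UNION_le[of "{j \<in> J. cell m j \<subseteq> cube 0 n}" A M] A \<open>finite J\<close> by auto
    moreover have "real (card {j \<in> J. cell m j \<subseteq> cube 0 n}) \<le> (2 * a0 + 14 * d + 1) ^ DIM('b)"
      using card_mono[OF \<open>finite J\<close>, of "{j \<in> J. cell m j \<subseteq> cube 0 n}"] card_grid_cells_le[of m a0 x] False a0
      unfolding J_def d_def by fastforce
    ultimately show ?thesis by (smt (verit) exp_gt_zero mult_right_mono)
  qed
  then show "empty_cell_event M P x a0 n m \<in> sets M"
    "measure M (empty_cell_event M P x a0 n m) \<le> (2 * a0 + 14 * d + 1) ^ DIM('b) * exp (- (real m ^ DIM('b)))"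
    by auto
qed

definition near_count :: "('a \<Rightarrow> 'b::euclidean_space set) \<Rightarrow> 'b \<Rightarrow> real \<Rightarrow> nat \<Rightarrow> 'a \<Rightarrow> nat" where
  "near_count P x r m \<omega> = card (P \<omega> \<inter> cube x (r + 12 * real DIM('b) * (real m + 1)))"

lemma near_count_measurable:
  assumes "poisson_pp M P"
  shows "near_count P x r m \<in> measurable M (count_space UNIV)"
  unfolding near_count_def by (rule poisson_ppD(3)[OF assms cube_in_sets_lborel bounded_cube])

lemma near_count_Poisson:
  fixes r :: real and m :: nat
  defines "lam \<equiv> (2 * (r + 12 * real DIM('b) * (real m + 1))) ^ DIM('b)"
  assumes "poisson_pp M (P :: 'a \<Rightarrow> 'b::euclidean_space set)" "0 \<le> r"
  shows "measure M {\<omega> \<in> space M. near_count P x r m \<omega> = k} = lam ^ k / fact k * exp (- lam)"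
  using poisson_ppD(4)[OF assms(2) cube_in_sets_lborel bounded_cube] assms(3)
  unfolding near_count_def lam_def by (simp add: measure_cube)

lemma borel_measurable_empty_cell_near_count:
  fixes c q :: real
  assumes "poisson_pp M P" "0 \<le> a0"
  shows "(\<lambda>\<omega>. indicator (empty_cell_event M P x a0 n m) \<omega> * (c * real (near_count P x a0 m \<omega>)) powr q)
    \<in> borel_measurable M"
proof -
  have "(\<lambda>\<omega>. (c * near_count P x a0 m \<omega>) powr q) \<in> borel_measurable M"
    by (rule measurable_compose[OF near_count_measurable[OF assms(1)]]) simp
  then show ?thesis using empty_cell_event(1)[OF assms] by (intro borel_measurable_times) auto
qed

text \<open>The count near the cube has mean \<open>O(m ^ d)\<close>, and \<open>\<delta>\<close> is chosen so that
  \<open>\<delta>\<close> times this mean is at most \<open>A0 + m ^ d / 2\<close>; hence its \<open>q\<close>-th moment on the empty-cell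
  event decays like \<open>exp (- m ^ d / 4)\<close>.\<close>

lemma nn_integral_empty_cell_near_count_le:
  fixes a0 q :: real
  assumes a0: "0 \<le> a0" and q: "0 \<le> q"
  obtains K :: real where "0 \<le> K"
    "\<And>M (P :: 'a \<Rightarrow> 'b::euclidean_space set) x n m. poisson_pp M P \<Longrightarrow>
      (\<integral>\<^sup>+\<omega>. ennreal (indicator (empty_cell_event M P x a0 n m) \<omega> *
          ((1 + real m) * near_count P x a0 m \<omega>) powr q) \<partial>M)
        \<le> ennreal (K * exp (- (real m / 8)))"
proof -
  define D where "D = DIM('b)"
  define d where "d = real D"
  have D: "1 \<le> D" unfolding D_def using DIM_positive[where 'a='b] by linarith
  then have d: "1 \<le> d" unfolding d_def by simp
  define p where "p = nat \<lceil>q\<rceil>"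
  have qp: "q \<le> real p" unfolding p_def by linarith
  define G where "G = (2 * a0 + 14 * d + 1) ^ D"
  define \<delta> where "\<delta> = 1 / (2 * (48 * d) ^ D)"
  define A0 where "A0 = \<delta> * 2 ^ D * (2 * a0 + 24 * d) ^ D"
  define B where "B = fact p / (ln (1 + \<delta>) / 2) ^ p"
  define W where "W = G + B * G / 2 + B / 2 * exp A0"
  define K where "K = W * (1 + fact p * 8 ^ p * exp (1 / 8))"
  have \<delta>: "0 < \<delta>" unfolding \<delta>_def using d by simp
  have G: "0 \<le> G" unfolding G_def using a0 d by simp
  have W: "0 \<le> W" unfolding W_def B_def using G \<delta> by simp
  show ?thesis
  proof (rule that)
    show "0 \<le> K" unfolding K_def using W by simp
    fix M and P :: "'a \<Rightarrow> 'b set" and x :: 'b and n :: real and m :: nat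
    assume pp: "poisson_pp M P"
    define u where "u = real m ^ D"
    define lam where "lam = (2 * (a0 + 12 * d * (real m + 1))) ^ D"
    let ?E = "empty_cell_event M P x a0 n m"
    have lam: "0 \<le> lam" unfolding lam_def using a0 d by simp
    have dist: "measure M {\<omega> \<in> space M. near_count P x a0 m \<omega> = k} = lam ^ k / fact k * exp (- lam)" for k
      using near_count_Poisson[OF pp a0] unfolding lam_def d_def D_def .
    have lam_\<delta>: "lam * \<delta> \<le> A0 + u / 2"
      unfolding lam_def A0_def u_def \<delta>_def using d by (intro power_scaled_le_split a0) simp
    have E: "?E \<in> sets M" "measure M ?E \<le> G * exp (- u)"
      using empty_cell_event[OF pp a0, of x n m] unfolding G_def u_def d_def D_def by auto
    let ?f = "\<lambda>\<omega>. indicator ?E \<omega> * real (near_count P x a0 m \<omega>) powr q"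
    have "?f \<in> borel_measurable M"
      using borel_measurable_empty_cell_near_count[OF pp a0, of x n m 1 q] by simp
    have "ennreal (indicator ?E \<omega> * ((1 + real m) * near_count P x a0 m \<omega>) powr q)
        = ennreal ((1 + real m) powr q) * ennreal (?f \<omega>)" for \<omega>
      by (simp add: powr_mult mult.left_commute flip: ennreal_mult')
    then have "(\<integral>\<^sup>+\<omega>. ennreal (indicator ?E \<omega> * ((1 + real m) * near_count P x a0 m \<omega>) powr q) \<partial>M)
        = ennreal ((1 + real m) powr q) * (\<integral>\<^sup>+\<omega>. ennreal (?f \<omega>) \<partial>M)"
      using \<open>?f \<in> borel_measurable M\<close> by (simp add: nn_integral_cmult)
    also have "\<dots> \<le> ennreal ((1 + real m) powr q) * ennreal (W * exp (- (u / 4)))"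
      using nn_integral_indicator_Poisson_powr_le_exp[OF poisson_ppD(1)[OF pp]
          near_count_measurable[OF pp] lam dist E G _ \<delta> lam_\<delta> q qp]
      unfolding W_def B_def u_def by (intro mult_left_mono) simp_all
    also have "ennreal ((1 + real m) powr q) * ennreal (W * exp (- (u / 4))) \<le> ennreal (K * exp (- (real m / 8)))"
      using mult_left_mono[OF one_plus_powr_mult_exp_le[OF q qp, of D m] W] W D
      unfolding K_def u_def by (simp add: ennreal_mult'[symmetric] ennreal_leI mult_ac)
    finally show "(\<integral>\<^sup>+\<omega>. ennreal (indicator ?E \<omega> * ((1 + real m) * near_count P x a0 m \<omega>) powr q) \<partial>M)
        \<le> ennreal (K * exp (- (real m / 8)))" .
  qed
qed

lemma MST_len_remove_cube_powr_le_suminf: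
  fixes P :: "'a \<Rightarrow> 'b::euclidean_space set" and a a0 n q :: real
  defines "c \<equiv> (24 * real DIM('b) + 2 * a0 * real DIM('b)) powr q"
  assumes pp: "poisson_pp M P" and \<omega>: "\<omega> \<in> space M" and a: "0 < a" "a \<le> a0" and q: "0 \<le> q"
  shows "ennreal (\<bar>MST_len (P \<omega> \<inter> cube 0 n) - MST_len (P \<omega> \<inter> (cube 0 n - cube x a))\<bar> powr q)
    \<le> (\<Sum>m. ennreal c * ennreal (indicator (empty_cell_event M P x a0 n m) \<omega> *
                                   ((1 + real m) * near_count P x a0 m \<omega>) powr q))"
proof -
  obtain m where m: "m = 0 \<or> has_empty_cell (P \<omega>) x a0 n m"
    and "\<bar>MST_len (P \<omega> \<inter> cube 0 n) - MST_len (P \<omega> \<inter> (cube 0 n - cube x a))\<bar>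
      \<le> (24 * real DIM('b) + 2 * a0 * real DIM('b)) * (1 + real m) * near_count P x a0 m \<omega>"
    using MST_len_remove_cube_le_count[OF poisson_ppD(2)[OF pp \<omega>] a, of x n]
    unfolding near_count_def by blast
  then have bound: "\<bar>MST_len (P \<omega> \<inter> cube 0 n) - MST_len (P \<omega> \<inter> (cube 0 n - cube x a))\<bar>
      \<le> (24 * real DIM('b) + 2 * a0 * real DIM('b)) * ((1 + real m) * near_count P x a0 m \<omega>)"
    by (simp only: mult.assoc)
  have "indicator (empty_cell_event M P x a0 n m) \<omega> = (1::real)"
    using m \<omega> by (simp add: empty_cell_event_def)
  moreover have "\<bar>MST_len (P \<omega> \<inter> cube 0 n) - MST_len (P \<omega> \<inter> (cube 0 n - cube x a))\<bar> powr q
      \<le> c * ((1 + real m) * near_count P x a0 m \<omega>) powr q"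
    using powr_mono2[OF q _ bound] a unfolding c_def by (simp add: powr_mult)
  ultimately have "ennreal (\<bar>MST_len (P \<omega> \<inter> cube 0 n) - MST_len (P \<omega> \<inter> (cube 0 n - cube x a))\<bar> powr q)
      \<le> ennreal c * ennreal (indicator (empty_cell_event M P x a0 n m) \<omega> *
                           ((1 + real m) * near_count P x a0 m \<omega>) powr q)"
    unfolding c_def by (simp add: ennreal_leI flip: ennreal_mult')
  also have "\<dots> \<le> (\<Sum>m. ennreal c * ennreal (indicator (empty_cell_event M P x a0 n m) \<omega> *
                                              ((1 + real m) * near_count P x a0 m \<omega>) powr q))"
    (is "_ \<le> suminf ?g")
    using sum_le_suminf[OF summableI, of "{m}" ?g] by (simp only: sum.insert finite.emptyI
        empty_iff not_False_eq_True sum.empty add.right_neutral zero_le finite_insert)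
  finally show ?thesis .
qed

lemma MST_len_remove_cube_moment_bounded:
  fixes a0 q :: real
  assumes a0: "0 \<le> a0" and q: "0 \<le> q"
  obtains C where "\<And>M (P :: 'a \<Rightarrow> 'b::euclidean_space set) x a n. poisson_pp M P \<Longrightarrow> 0 < a \<Longrightarrow> a \<le> a0 \<Longrightarrow>
    (\<integral>\<^sup>+\<omega>. ennreal (\<bar>MST_len (P \<omega> \<inter> cube 0 n) - MST_len (P \<omega> \<inter> (cube 0 n - cube x a))\<bar> powr q) \<partial>M)
      \<le> ennreal C"
proof -
  obtain K where K: "0 \<le> K" and decay: "\<And>M (P :: 'a \<Rightarrow> 'b set) x n m. poisson_pp M P \<Longrightarrow>
      (\<integral>\<^sup>+\<omega>. ennreal (indicator (empty_cell_event M P x a0 n m) \<omega> *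
          ((1 + real m) * near_count P x a0 m \<omega>) powr q) \<partial>M) \<le> ennreal (K * exp (- (real m / 8)))"
    using nn_integral_empty_cell_near_count_le[OF a0 q] by blast
  define c where "c = (24 * real DIM('b) + 2 * a0 * real DIM('b)) powr q"
  have c: "0 \<le> c" unfolding c_def by simp
  have summable: "summable (\<lambda>m. c * K * exp (- (real m / 8)))"
    using summable_exp_neg_div[of 8] by (intro summable_mult) simp
  show ?thesis
  proof (rule that)
    fix M and P :: "'a \<Rightarrow> 'b set" and x :: 'b and a n :: real
    assume pp: "poisson_pp M P" and a: "0 < a" "a \<le> a0"
    let ?f = "\<lambda>m \<omega>. ennreal (indicator (empty_cell_event M P x a0 n m) \<omega> *
                             ((1 + real m) * near_count P x a0 m \<omega>) powr q)"
    have f: "?f m \<in> borel_measurable M" for m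
      using borel_measurable_empty_cell_near_count[OF pp a0, where c = "1 + real m" and m = m] by simp
    have "(\<integral>\<^sup>+\<omega>. ennreal (\<bar>MST_len (P \<omega> \<inter> cube 0 n) - MST_len (P \<omega> \<inter> (cube 0 n - cube x a))\<bar> powr q) \<partial>M)
        \<le> (\<integral>\<^sup>+\<omega>. (\<Sum>m. ennreal c * ?f m \<omega>) \<partial>M)"
      using MST_len_remove_cube_powr_le_suminf[OF pp _ a q] unfolding c_def by (intro nn_integral_mono) blast
    also have "\<dots> = (\<Sum>m. \<integral>\<^sup>+\<omega>. ennreal c * ?f m \<omega> \<partial>M)"
      using f by (intro nn_integral_suminf) simp
    also have "\<dots> = (\<Sum>m. ennreal c * (\<integral>\<^sup>+\<omega>. ?f m \<omega> \<partial>M))"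
      using f by (simp add: nn_integral_cmult)
    also have "\<dots> \<le> (\<Sum>m. ennreal (c * K * exp (- (real m / 8))))"
      using decay[OF pp] c by (intro suminf_le summableI) (simp_all add: ennreal_mult' mult_left_mono mult.assoc)
    also have "\<dots> = ennreal (\<Sum>m. c * K * exp (- (real m / 8)))"
      using summable K c by (intro suminf_ennreal2) auto
    finally show "(\<integral>\<^sup>+\<omega>. ennreal (\<bar>MST_len (P \<omega> \<inter> cube 0 n) - MST_len (P \<omega> \<inter> (cube 0 n - cube x a))\<bar> powr q) \<partial>M)
        \<le> ennreal (\<Sum>m. c * K * exp (- (real m / 8)))" .
  qed
qed

theorem lemma7p7:
  fixes a0 q :: real
  assumes "a0 > 0" and "q \<ge> 1"
  shows "\<exists>C::real. \<forall>(M::'a measure) (P::'a \<Rightarrow> 'b::euclidean_space set) (x::'b) (a::real) (n::real).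
           poisson_pp M P \<and> 0 < a \<and> a \<le> a0 \<and> n \<ge> max (2 * a0) 1 \<and> cube x a \<subseteq> cube 0 n \<longrightarrow>
           (\<integral>\<^sup>+ \<omega>. ennreal (\<bar>MST_len (P \<omega> \<inter> cube 0 n) - MST_len (P \<omega> \<inter> (cube 0 n - cube x a))\<bar> powr q) \<partial>M)
             \<le> ennreal C"
proof -
  have "0 \<le> a0" "0 \<le> q" using assms by simp_all
  from MST_len_remove_cube_moment_bounded[OF this]
  obtain C where "\<And>M (P :: 'a \<Rightarrow> 'b set) x a n. poisson_pp M P \<Longrightarrow> 0 < a \<Longrightarrow> a \<le> a0 \<Longrightarrow>
      (\<integral>\<^sup>+\<omega>. ennreal (\<bar>MST_len (P \<omega> \<inter> cube 0 n) - MST_len (P \<omega> \<inter> (cube 0 n - cube x a))\<bar> powr q) \<partial>M)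
        \<le> ennreal C" by blast
  then show ?thesis by blast
qed

end
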